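(* Let $p_\theta(\tau)$ be a family of distributions over trajectories $\tau$, differentiable in the parameter $\theta$, with real reward $R(\tau)$. Let $S=S(\tau;\theta)$ be a discrete stratum assignment (which may depend on $\theta$), $p_k(\theta)=\Pr_\theta(S=k)$, $\mu_k(\theta)=\mathbb E_\theta[R\mid S=k]$, and $\sigma_k(\theta)>0$ the stratum-wise standard deviation of $R$ given $S=k$. Let $\varepsilon>0$ and define \[A_{\mathrm{SAN}}(\tau)=\frac{R(\tau)-\mu_S(\theta)}{\sigma_S(\theta)+\varepsilon}.\] Then, under standard regularity conditions allowing differentiation under the expectation, \[\mathbb E_\theta\big[A_{\mathrm{SAN}}(\tau)\nabla_\theta\log p_\theta(\tau)\big]=\sum_k\frac{p_k(\theta)}{\sigma_k(\theta)+\varepsilon}\nabla_\theta\mu_k(\theta).\] *)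

theory Defs
  imports "HOL-Analysis.Analysis"
begin

definition grad :: "('a::euclidean_space \<Rightarrow> real) \<Rightarrow> 'a \<Rightarrow> 'a" where
  "grad f x = (THE g. (f has_derivative (\<lambda>h. g \<bullet> h)) (at x))"

definition expect :: "'t measure \<Rightarrow> ('a \<Rightarrow> 't \<Rightarrow> real) \<Rightarrow> 'a \<Rightarrow> ('t \<Rightarrow> 'b::{banach,second_countable_topology}) \<Rightarrow> 'b" where
  "expect M p \<theta> f = (\<integral>\<tau>. p \<theta> \<tau> *\<^sub>R f \<tau> \<partial>M)"

definition strat_prob :: "'t measure \<Rightarrow> ('a \<Rightarrow> 't \<Rightarrow> real) \<Rightarrow> ('a \<Rightarrow> 't \<Rightarrow> 'k) \<Rightarrow> 'a \<Rightarrow> 'k \<Rightarrow> real" where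
  "strat_prob M p S \<theta> k = expect M p \<theta> (\<lambda>\<tau>. if S \<theta> \<tau> = k then 1 else 0)"

definition strat_mean :: "'t measure \<Rightarrow> ('a \<Rightarrow> 't \<Rightarrow> real) \<Rightarrow> ('a \<Rightarrow> 't \<Rightarrow> 'k) \<Rightarrow> ('t \<Rightarrow> real) \<Rightarrow> 'a \<Rightarrow> 'k \<Rightarrow> real" where
  "strat_mean M p S R \<theta> k =
     expect M p \<theta> (\<lambda>\<tau>. if S \<theta> \<tau> = k then R \<tau> else 0) / strat_prob M p S \<theta> k"

definition strat_sd :: "'t measure \<Rightarrow> ('a \<Rightarrow> 't \<Rightarrow> real) \<Rightarrow> ('a \<Rightarrow> 't \<Rightarrow> 'k) \<Rightarrow> ('t \<Rightarrow> real) \<Rightarrow> 'a \<Rightarrow> 'k \<Rightarrow> real" where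
  "strat_sd M p S R \<theta> k =
     sqrt (expect M p \<theta> (\<lambda>\<tau>. if S \<theta> \<tau> = k then (R \<tau> - strat_mean M p S R \<theta> k)\<^sup>2 else 0)
           / strat_prob M p S \<theta> k)"

definition A_SAN :: "'t measure \<Rightarrow> ('a \<Rightarrow> 't \<Rightarrow> real) \<Rightarrow> ('a \<Rightarrow> 't \<Rightarrow> 'k) \<Rightarrow> ('t \<Rightarrow> real) \<Rightarrow> real \<Rightarrow> 'a \<Rightarrow> 't \<Rightarrow> real" where
  "A_SAN M p S R \<epsilon> \<theta> \<tau> =
     (R \<tau> - strat_mean M p S R \<theta> (S \<theta> \<tau>)) / (strat_sd M p S R \<theta> (S \<theta> \<tau>) + \<epsilon>)"

end

theory Submission
  imports Defs
begin

text \<open>On stratum \<open>k\<close> the advantage is \<open>(R - \<mu>\<^sub>k) / (\<sigma>\<^sub>k + \<epsilon>)\<close>, with a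
  constant denominator, so the expectation splits into a finite sum over strata. The
  log-derivative trick \<open>p \<nabla> log p = \<nabla>p\<close> turns each stratum term into
  \<open>\<nabla>N\<^sub>k - \<mu>\<^sub>k \<nabla>P\<^sub>k\<close>, where \<open>P\<^sub>k = \<integral> 1{S = k} p\<close> and \<open>N\<^sub>k = \<integral> 1{S = k} p R\<close> are
  differentiated under the integral. Since \<open>\<mu>\<^sub>k = N\<^sub>k / P\<^sub>k\<close>, the quotient rule gives
  exactly \<open>\<nabla>N\<^sub>k - \<mu>\<^sub>k \<nabla>P\<^sub>k = P\<^sub>k \<nabla>\<mu>\<^sub>k\<close>.\<close>

lemma grad_eqI:
  fixes f :: "'a::euclidean_space \<Rightarrow> real"
  assumes "(f has_derivative (\<lambda>h. g \<bullet> h)) (at x)"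
  shows "grad f x = g"
  unfolding grad_def
proof (rule the_equality)
  show "(f has_derivative (\<lambda>h. g \<bullet> h)) (at x)" by fact
  fix g' assume "(f has_derivative (\<lambda>h. g' \<bullet> h)) (at x)"
  from has_derivative_unique[OF this assms]
  have "(g' - g) \<bullet> (g' - g) = 0"
    by (metis inner_diff_left diff_self)
  then show "g' = g" by simp
qed

text \<open>At a zero of the nonnegative \<open>f\<close>, \<open>g\<close> vanishes because \<open>x\<close> is a minimum of \<open>f\<close>,
  and the junk value of the logarithm there is killed by the factor \<open>f x = 0\<close>.\<close>

lemma scaleR_grad_ln:
  fixes f :: "'a::euclidean_space \<Rightarrow> real"
  assumes nonneg: "\<And>y. f y \<ge> 0"
    and deriv: "(f has_derivative (\<lambda>h. g \<bullet> h)) (at x)"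
  shows "f x *\<^sub>R grad (\<lambda>y. ln (f y)) x = g"
proof (cases "f x = 0")
  case True
  have "(\<lambda>h. g \<bullet> h) = (\<lambda>h. 0)"
    by (rule has_derivative_local_min[OF deriv]) (use True nonneg in auto)
  then have "g \<bullet> g = 0" by metis
  with True show ?thesis by simp
next
  case False
  with nonneg have pos: "f x > 0" by (simp add: order_less_le)
  have "((\<lambda>y. ln (f y)) has_derivative (\<lambda>h. ((1 / f x) *\<^sub>R g) \<bullet> h)) (at x)"
    using has_derivative_ln[OF pos deriv] by (simp add: field_simps)
  then have "grad (\<lambda>y. ln (f y)) x = (1 / f x) *\<^sub>R g" by (rule grad_eqI)
  with False show ?thesis by simp
qed

lemma has_derivative_divide_inner:
  fixes N P :: "'a::real_inner \<Rightarrow> real"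
  assumes dN: "(N has_derivative (\<lambda>h. N' \<bullet> h)) (at x)"
    and dP: "(P has_derivative (\<lambda>h. P' \<bullet> h)) (at x)"
    and nz: "P x \<noteq> 0"
  shows "((\<lambda>y. N y / P y) has_derivative
           (\<lambda>h. ((1 / P x) *\<^sub>R (N' - (N x / P x) *\<^sub>R P')) \<bullet> h)) (at x)"
proof -
  have "(\<lambda>h. (N' \<bullet> h * P x - N x * (P' \<bullet> h)) / (P x * P x))
      = (\<lambda>h. ((1 / P x) *\<^sub>R (N' - (N x / P x) *\<^sub>R P')) \<bullet> h)"
    using nz by (auto simp: fun_eq_iff inner_diff_left field_simps)
  with has_derivative_divide'[OF dN dP nz] show ?thesis by simp
qed

lemma integrable_if_level_set:
  fixes f :: "'t \<Rightarrow> 'b::{banach,second_countable_topology}"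
  assumes "{\<tau> \<in> space M. s \<tau> = k} \<in> sets M" and "integrable M f"
  shows "integrable M (\<lambda>\<tau>. if s \<tau> = k then f \<tau> else 0)"
  using integrable_mult_indicator[OF assms]
  by (rule Bochner_Integration.integrable_cong[THEN iffD1, rotated 2]) (auto simp: indicator_def)

lemma integral_sum_level_sets:
  fixes F :: "'k \<Rightarrow> 't \<Rightarrow> 'b::{banach,second_countable_topology}"
  assumes "finite K" and range: "\<And>\<tau>. s \<tau> \<in> K"
    and meas: "\<And>k. {\<tau> \<in> space M. s \<tau> = k} \<in> sets M"
    and int: "\<And>k. k \<in> K \<Longrightarrow> integrable M (F k)"
  shows "(\<integral>\<tau>. F (s \<tau>) \<tau> \<partial>M) = (\<Sum>k\<in>K. \<integral>\<tau>. (if s \<tau> = k then F k \<tau> else 0) \<partial>M)"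
proof -
  have "F (s \<tau>) \<tau> = (\<Sum>k\<in>K. if s \<tau> = k then F k \<tau> else 0)" for \<tau>
    using \<open>finite K\<close> range by (simp add: sum.delta')
  then have "(\<integral>\<tau>. F (s \<tau>) \<tau> \<partial>M) = (\<integral>\<tau>. (\<Sum>k\<in>K. if s \<tau> = k then F k \<tau> else 0) \<partial>M)"
    by simp
  also have "\<dots> = (\<Sum>k\<in>K. \<integral>\<tau>. (if s \<tau> = k then F k \<tau> else 0) \<partial>M)"
    by (intro Bochner_Integration.integral_sum integrable_if_level_set meas int)
  finally show ?thesis .
qed

lemma integral_level_set_centered:
  fixes D :: "'t \<Rightarrow> 'b::{banach,second_countable_topology}"
  assumes meas: "{\<tau> \<in> space M. s \<tau> = k} \<in> sets M"
    and "integrable M D" and "integrable M (\<lambda>\<tau>. r \<tau> *\<^sub>R D \<tau>)"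
  shows "(\<integral>\<tau>. (if s \<tau> = k then c *\<^sub>R ((r \<tau> - m) *\<^sub>R D \<tau>) else 0) \<partial>M)
       = c *\<^sub>R ((\<integral>\<tau>. (if s \<tau> = k then r \<tau> *\<^sub>R D \<tau> else 0) \<partial>M)
                 - m *\<^sub>R (\<integral>\<tau>. (if s \<tau> = k then D \<tau> else 0) \<partial>M))"
proof -
  have rD: "integrable M (\<lambda>\<tau>. if s \<tau> = k then r \<tau> *\<^sub>R D \<tau> else 0)"
    and D: "integrable M (\<lambda>\<tau>. if s \<tau> = k then D \<tau> else 0)"
    using assms by (auto intro: integrable_if_level_set)
  have "(\<lambda>\<tau>. if s \<tau> = k then c *\<^sub>R ((r \<tau> - m) *\<^sub>R D \<tau>) else 0)
      = (\<lambda>\<tau>. c *\<^sub>R ((if s \<tau> = k then r \<tau> *\<^sub>R D \<tau> else 0) - m *\<^sub>R (if s \<tau> = k then D \<tau> else 0)))"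
    by (auto simp: fun_eq_iff scaleR_diff_left)
  then show ?thesis
    by (simp add: Bochner_Integration.integral_diff[OF rD integrable_scaleR_right[OF D]])
qed

lemma strat_prob_eq_integral:
  "strat_prob M p S \<theta> k = (\<integral>\<tau>. (if S \<theta> \<tau> = k then p \<theta> \<tau> else 0) \<partial>M)"
  unfolding strat_prob_def expect_def by (rule Bochner_Integration.integral_cong) auto

lemma strat_mean_eq_quotient:
  "strat_mean M p S R \<theta> k
     = (\<integral>\<tau>. (if S \<theta> \<tau> = k then p \<theta> \<tau> * R \<tau> else 0) \<partial>M) / strat_prob M p S \<theta> k"
  unfolding strat_mean_def expect_def
  by (intro arg_cong2[where f="(/)"] refl Bochner_Integration.integral_cong) auto

text \<open>Division by zero yields zero, so a positive standard deviation forces a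
  nonzero stratum probability.\<close>

lemma strat_prob_nonzero_if_sd_pos:
  assumes "strat_sd M p S R \<theta> k > 0"
  shows "strat_prob M p S \<theta> k \<noteq> 0"
  using assms unfolding strat_sd_def by auto

lemma has_derivative_strat_mean:
  assumes nz: "strat_prob M p S \<theta>0 k \<noteq> 0"
    and dP: "((\<lambda>\<theta>. \<integral>\<tau>. (if S \<theta> \<tau> = k then p \<theta> \<tau> else 0) \<partial>M) has_derivative
              (\<lambda>h. P' \<bullet> h)) (at \<theta>0)"
    and dN: "((\<lambda>\<theta>. \<integral>\<tau>. (if S \<theta> \<tau> = k then p \<theta> \<tau> * R \<tau> else 0) \<partial>M) has_derivative
              (\<lambda>h. N' \<bullet> h)) (at \<theta>0)"
  shows "((\<lambda>\<theta>. strat_mean M p S R \<theta> k) has_derivative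
           (\<lambda>h. ((1 / strat_prob M p S \<theta>0 k)
                  *\<^sub>R (N' - strat_mean M p S R \<theta>0 k *\<^sub>R P')) \<bullet> h)) (at \<theta>0)"
  using has_derivative_divide_inner[OF dN dP] nz
  unfolding strat_mean_eq_quotient strat_prob_eq_integral by simp

theorem mainTheorem5:
  fixes M :: "'t measure"
    and p :: "'a::euclidean_space \<Rightarrow> 't \<Rightarrow> real"
    and Dp :: "'a \<Rightarrow> 't \<Rightarrow> 'a"
    and R :: "'t \<Rightarrow> real"
    and S :: "'a \<Rightarrow> 't \<Rightarrow> 'k"
    and K :: "'k set"
    and \<epsilon> :: real
    and \<theta>0 :: 'a
  assumes dens_nonneg: "\<And>\<theta> \<tau>. p \<theta> \<tau> \<ge> 0"
    and dens_meas: "\<And>\<theta>. p \<theta> \<in> borel_measurable M"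
    and dens_int: "\<And>\<theta>. integrable M (p \<theta>)"
    and dens_one: "\<And>\<theta>. (\<integral>\<tau>. p \<theta> \<tau> \<partial>M) = 1"
    and dens_diff: "\<And>\<theta> \<tau>. ((\<lambda>\<theta>'. p \<theta>' \<tau>) has_derivative (\<lambda>h. Dp \<theta> \<tau> \<bullet> h)) (at \<theta>)"
    and R_meas: "R \<in> borel_measurable M"
    and R_int: "\<And>\<theta>. integrable M (\<lambda>\<tau>. p \<theta> \<tau> * R \<tau>)"
    and R2_int: "\<And>\<theta>. integrable M (\<lambda>\<tau>. p \<theta> \<tau> * (R \<tau>)\<^sup>2)"
    and K_fin: "finite K"
    and S_range: "\<And>\<theta> \<tau>. S \<theta> \<tau> \<in> K"
    and S_meas: "\<And>\<theta> k. {\<tau> \<in> space M. S \<theta> \<tau> = k} \<in> sets M"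
    and sd_pos: "\<And>k. k \<in> K \<Longrightarrow> strat_sd M p S R \<theta>0 k > 0"
    and eps_pos: "\<epsilon> > 0"
    and Dp_int: "integrable M (\<lambda>\<tau>. Dp \<theta>0 \<tau>)"
    and RDp_int: "integrable M (\<lambda>\<tau>. R \<tau> *\<^sub>R Dp \<theta>0 \<tau>)"
    and diff_under_int_prob: "\<And>k. k \<in> K \<Longrightarrow>
        ((\<lambda>\<theta>. \<integral>\<tau>. (if S \<theta> \<tau> = k then p \<theta> \<tau> else 0) \<partial>M) has_derivative
         (\<lambda>h. (\<integral>\<tau>. (if S \<theta>0 \<tau> = k then Dp \<theta>0 \<tau> else 0) \<partial>M) \<bullet> h)) (at \<theta>0)"
    and diff_under_int_R: "\<And>k. k \<in> K \<Longrightarrow>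
        ((\<lambda>\<theta>. \<integral>\<tau>. (if S \<theta> \<tau> = k then p \<theta> \<tau> * R \<tau> else 0) \<partial>M) has_derivative
         (\<lambda>h. (\<integral>\<tau>. (if S \<theta>0 \<tau> = k then R \<tau> *\<^sub>R Dp \<theta>0 \<tau> else 0) \<partial>M) \<bullet> h)) (at \<theta>0)"
  shows "(\<forall>k\<in>K. (\<lambda>\<theta>. strat_mean M p S R \<theta> k) differentiable (at \<theta>0))
    \<and> expect M p \<theta>0 (\<lambda>\<tau>. A_SAN M p S R \<epsilon> \<theta>0 \<tau> *\<^sub>R grad (\<lambda>\<theta>. ln (p \<theta> \<tau>)) \<theta>0)
      = (\<Sum>k\<in>K. (strat_prob M p S \<theta>0 k / (strat_sd M p S R \<theta>0 k + \<epsilon>))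
                   *\<^sub>R grad (\<lambda>\<theta>. strat_mean M p S R \<theta> k) \<theta>0)"
proof -
  define P where "P k = strat_prob M p S \<theta>0 k" for k
  define \<mu> where "\<mu> k = strat_mean M p S R \<theta>0 k" for k
  define c where "c k = 1 / (strat_sd M p S R \<theta>0 k + \<epsilon>)" for k
  define P' where "P' k = (\<integral>\<tau>. (if S \<theta>0 \<tau> = k then Dp \<theta>0 \<tau> else 0) \<partial>M)" for k
  define N' where "N' k = (\<integral>\<tau>. (if S \<theta>0 \<tau> = k then R \<tau> *\<^sub>R Dp \<theta>0 \<tau> else 0) \<partial>M)" for k
  have P_nz: "P k \<noteq> 0" if "k \<in> K" for k
    unfolding P_def using strat_prob_nonzero_if_sd_pos[OF sd_pos[OF that]] .
  have d\<mu>: "((\<lambda>\<theta>. strat_mean M p S R \<theta> k) has_derivative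
      (\<lambda>h. ((1 / P k) *\<^sub>R (N' k - \<mu> k *\<^sub>R P' k)) \<bullet> h)) (at \<theta>0)" if "k \<in> K" for k
    unfolding P_def \<mu>_def N'_def P'_def
    using has_derivative_strat_mean[OF P_nz[OF that, unfolded P_def]
        diff_under_int_prob[OF that] diff_under_int_R[OF that]] .
  have "expect M p \<theta>0 (\<lambda>\<tau>. A_SAN M p S R \<epsilon> \<theta>0 \<tau> *\<^sub>R grad (\<lambda>\<theta>. ln (p \<theta> \<tau>)) \<theta>0)
      = (\<integral>\<tau>. c (S \<theta>0 \<tau>) *\<^sub>R ((R \<tau> - \<mu> (S \<theta>0 \<tau>)) *\<^sub>R Dp \<theta>0 \<tau>) \<partial>M)"
    unfolding expect_def scaleR_left_commute[of "p \<theta>0 _"]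
      scaleR_grad_ln[OF dens_nonneg dens_diff]
    by (simp add: A_SAN_def c_def \<mu>_def)
  also have "\<dots> = (\<Sum>k\<in>K. \<integral>\<tau>. (if S \<theta>0 \<tau> = k then c k *\<^sub>R ((R \<tau> - \<mu> k) *\<^sub>R Dp \<theta>0 \<tau>) else 0) \<partial>M)"
    by (rule integral_sum_level_sets[OF K_fin S_range S_meas,
          where F="\<lambda>k \<tau>. c k *\<^sub>R ((R \<tau> - \<mu> k) *\<^sub>R Dp \<theta>0 \<tau>)"])
      (use RDp_int Dp_int in \<open>auto simp: scaleR_diff_left intro!: integrable_diff\<close>)
  also have "\<dots> = (\<Sum>k\<in>K. c k *\<^sub>R (N' k - \<mu> k *\<^sub>R P' k))"
    unfolding integral_level_set_centered[OF S_meas Dp_int RDp_int] N'_def P'_def ..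
  also have "\<dots> = (\<Sum>k\<in>K. (P k * c k) *\<^sub>R grad (\<lambda>\<theta>. strat_mean M p S R \<theta> k) \<theta>0)"
    by (rule sum.cong) (simp_all add: grad_eqI[OF d\<mu>] P_nz)
  finally show ?thesis
    using d\<mu> unfolding differentiable_def P_def c_def by auto
qed

end
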